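(* Let $l\in\mathbb{N}\setminus\{1\}$ and let $(S_i,+)$, $i=1,\dots,l$, be countable adequate commutative partial semigroups. For each $i\in\{1,\dots,l\}$ let $\langle x_{i,n}\rangle_{n=1}^{\infty}$ be an adequate sequence in $S_i$. Let $m,r\in\mathbb{N}$ and suppose $S_1\times S_2\times\cdots\times S_l=\bigcup_{j=1}^{r}D_j$. Then there exist $j\in\{1,\dots,r\}$, for each $i\in\{1,\dots,l-1\}$ a product subsystem $\langle y_{i,n}\rangle_{n=1}^{m}$ of $FS(\langle x_{i,n}\rangle_{n=1}^{\infty})$, and an (infinite) product subsystem $\langle y_{l,n}\rangle_{n=1}^{\infty}$ of $FS(\langle x_{l,n}\rangle_{n=1}^{\infty})$ such that \[ \Big(FS(\langle y_{1,n}\rangle_{n=1}^{m})\times\cdots\times FS(\langle y_{l-1,n}\rangle_{n=1}^{m})\Big)\times FS(\langle y_{l,n}\rangle_{n=1}^{\infty})\subseteq D_j . \]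
   Context: A partial semigroup $(S,+)$ is a set with a map $+$ from a subset of $S\times S$ to $S$ such that $(a+b)+c=a+(b+c)$ whenever either side is defined (then both are defined and equal). It is commutative if for all $a,b$, $a+b$ is defined iff $b+a$ is defined, and then they are equal. For $s\in S$, $\varphi(s)=\{t: s+t\text{ defined}\}$; for finite nonempty $H\subseteq S$, $\sigma(H)=\bigcap_{s\in H}\varphi(s)$; $S$ is adequate if all $\sigma(H)\ne\emptyset$. For a sequence $\langle x_n\rangle$, $FS(\langle x_n\rangle_{n=k}^{\infty})$ is the set of sums $\sum_{n\in F}x_n$ over finite nonempty $F\subseteq\{k,k+1,\dots\}$, and $FS(\langle x_n\rangle_{n=1}^{m})$ the set of such sums over nonempty $F\subseteq\{1,\dots,m\}$. A sequence $\langle x_n\rangle_{n=1}^\infty$ in $S$ is adequate if every $\sum_{n\in F}x_n$ ($F$ finite nonempty) is defined and for every finite nonempty $H\subseteq S$ there is $m$ with $FS(\langle x_n\rangle_{n=m}^\infty)\subseteq\sigma(H)$. Given an adequate sequence $\langle y_n\rangle$ and $k\in\mathbb{N}$, a sequence $\langle x_n\rangle_{n=1}^{m}$ (resp. $\langle x_n\rangle_{n=1}^{\infty}$) is a product subsystem of $FS(\langle y_n\rangle_{n=k}^{\infty})$ if there are finite nonempty $H_n\subseteq\mathbb{N}$ with $\min H_1\ge k$, $\max H_n<\min H_{n+1}$ for all relevant $n$, and $x_n=\sum_{t\in H_n}y_t$ for all relevant $n$. *)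

theory Defs
  imports Main "HOL-Library.Countable_Set" "HOL-Library.FuncSet"
begin

text \<open>A partial operation on a carrier S is modelled as f :: 'a => 'a => 'a option,
  where f a b = None means a + b is undefined.\<close>

definition partial_semigroup :: "'a set \<Rightarrow> ('a \<Rightarrow> 'a \<Rightarrow> 'a option) \<Rightarrow> bool" where
  "partial_semigroup S f \<longleftrightarrow>
     (\<forall>a\<in>S. \<forall>b\<in>S. \<forall>c. f a b = Some c \<longrightarrow> c \<in> S) \<and>
     (\<forall>a\<in>S. \<forall>b\<in>S. \<forall>c\<in>S.
        Option.bind (f a b) (\<lambda>x. f x c) = Option.bind (f b c) (\<lambda>y. f a y))"

definition commutative_ps :: "'a set \<Rightarrow> ('a \<Rightarrow> 'a \<Rightarrow> 'a option) \<Rightarrow> bool" where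
  "commutative_ps S f \<longleftrightarrow> (\<forall>a\<in>S. \<forall>b\<in>S. f a b = f b a)"

definition phi :: "'a set \<Rightarrow> ('a \<Rightarrow> 'a \<Rightarrow> 'a option) \<Rightarrow> 'a \<Rightarrow> 'a set" where
  "phi S f s = {t \<in> S. f s t \<noteq> None}"

definition sigma :: "'a set \<Rightarrow> ('a \<Rightarrow> 'a \<Rightarrow> 'a option) \<Rightarrow> 'a set \<Rightarrow> 'a set" where
  "sigma S f H = S \<inter> (\<Inter>s\<in>H. phi S f s)"

definition adequate :: "'a set \<Rightarrow> ('a \<Rightarrow> 'a \<Rightarrow> 'a option) \<Rightarrow> bool" where
  "adequate S f \<longleftrightarrow> (\<forall>H. finite H \<and> H \<noteq> {} \<and> H \<subseteq> S \<longrightarrow> sigma S f H \<noteq> {})"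

fun osum :: "('a \<Rightarrow> 'a \<Rightarrow> 'a option) \<Rightarrow> (nat \<Rightarrow> 'a) \<Rightarrow> nat list \<Rightarrow> 'a option" where
  "osum f x [] = None"
| "osum f x [n] = Some (x n)"
| "osum f x (n # ns) = Option.bind (osum f x ns) (\<lambda>s. f (x n) s)"

definition fsum :: "('a \<Rightarrow> 'a \<Rightarrow> 'a option) \<Rightarrow> (nat \<Rightarrow> 'a) \<Rightarrow> nat set \<Rightarrow> 'a option" where
  "fsum f x F = osum f x (sorted_list_of_set F)"

definition FS :: "('a \<Rightarrow> 'a \<Rightarrow> 'a option) \<Rightarrow> (nat \<Rightarrow> 'a) \<Rightarrow> nat set \<Rightarrow> 'a set" where
  "FS f x A = {s. \<exists>F. finite F \<and> F \<noteq> {} \<and> F \<subseteq> A \<and> fsum f x F = Some s}"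

definition adequate_seq :: "'a set \<Rightarrow> ('a \<Rightarrow> 'a \<Rightarrow> 'a option) \<Rightarrow> (nat \<Rightarrow> 'a) \<Rightarrow> bool" where
  "adequate_seq S f x \<longleftrightarrow>
     (\<forall>n\<ge>1. x n \<in> S) \<and>
     (\<forall>F. finite F \<and> F \<noteq> {} \<and> F \<subseteq> {1..} \<longrightarrow> fsum f x F \<noteq> None) \<and>
     (\<forall>H. finite H \<and> H \<noteq> {} \<and> H \<subseteq> S \<longrightarrow>
        (\<exists>m\<ge>1. FS f x {m..} \<subseteq> sigma S f H))"

definition product_subsystem_fin ::
  "('a \<Rightarrow> 'a \<Rightarrow> 'a option) \<Rightarrow> (nat \<Rightarrow> 'a) \<Rightarrow> nat \<Rightarrow> nat \<Rightarrow> (nat \<Rightarrow> 'a) \<Rightarrow> bool" where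
  "product_subsystem_fin f x k m y \<longleftrightarrow>
     (\<exists>H :: nat \<Rightarrow> nat set.
        (\<forall>n\<in>{1..m}. finite (H n) \<and> H n \<noteq> {}) \<and>
        (1 \<le> m \<longrightarrow> Min (H 1) \<ge> k) \<and>
        (\<forall>n. 1 \<le> n \<and> n < m \<longrightarrow> Max (H n) < Min (H (Suc n))) \<and>
        (\<forall>n\<in>{1..m}. fsum f x (H n) = Some (y n)))"

definition product_subsystem_inf ::
  "('a \<Rightarrow> 'a \<Rightarrow> 'a option) \<Rightarrow> (nat \<Rightarrow> 'a) \<Rightarrow> nat \<Rightarrow> (nat \<Rightarrow> 'a) \<Rightarrow> bool" where
  "product_subsystem_inf f x k y \<longleftrightarrow>
     (\<exists>H :: nat \<Rightarrow> nat set.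
        (\<forall>n\<ge>1. finite (H n) \<and> H n \<noteq> {}) \<and>
        Min (H 1) \<ge> k \<and>
        (\<forall>n\<ge>1. Max (H n) < Min (H (Suc n))) \<and>
        (\<forall>n\<ge>1. fsum f x (H n) = Some (y n)))"

end

theory Submission
  imports Defs
begin

definition proper_filter :: "'b set set \<Rightarrow> bool" where
  "proper_filter F \<longleftrightarrow> UNIV \<in> F \<and> {} \<notin> F \<and> (\<forall>X Y. X \<in> F \<and> X \<subseteq> Y \<longrightarrow> Y \<in> F) \<and>
     (\<forall>X\<in>F. \<forall>Y\<in>F. X \<inter> Y \<in> F)"

definition ultrafilter :: "'b set set \<Rightarrow> bool" where
  "ultrafilter U \<longleftrightarrow> proper_filter U \<and> (\<forall>X. X \<in> U \<or> -X \<in> U)"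

lemma proper_filter_UNIV: "proper_filter F \<Longrightarrow> UNIV \<in> F"
  by (simp add: proper_filter_def)

lemma proper_filter_empty: "proper_filter F \<Longrightarrow> {} \<notin> F"
  by (simp add: proper_filter_def)

lemma proper_filter_nonempty: "proper_filter F \<Longrightarrow> X \<in> F \<Longrightarrow> X \<noteq> {}"
  using proper_filter_empty by blast

lemma proper_filter_mono: "proper_filter F \<Longrightarrow> X \<in> F \<Longrightarrow> X \<subseteq> Y \<Longrightarrow> Y \<in> F"
  unfolding proper_filter_def by blast

lemma proper_filter_Int: "proper_filter F \<Longrightarrow> X \<in> F \<Longrightarrow> Y \<in> F \<Longrightarrow> X \<inter> Y \<in> F"
  unfolding proper_filter_def by blast

lemma proper_filter_Int_iff: "proper_filter F \<Longrightarrow> X \<inter> Y \<in> F \<longleftrightarrow> X \<in> F \<and> Y \<in> F"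
  by (meson inf_le1 inf_le2 proper_filter_Int proper_filter_mono)

lemma proper_filter_INT:
  assumes "proper_filter F" "finite I" "\<forall>i\<in>I. A i \<in> F"
  shows "(\<Inter>i\<in>I. A i) \<in> F"
  using assms(2,3) by induction (simp_all add: assms(1) proper_filter_UNIV proper_filter_Int)

lemma ultrafilter_proper: "ultrafilter U \<Longrightarrow> proper_filter U"
  by (simp add: ultrafilter_def)

lemma ultrafilter_Compl_iff: "ultrafilter U \<Longrightarrow> -X \<in> U \<longleftrightarrow> X \<notin> U"
  unfolding ultrafilter_def using proper_filter_Int[of U X "-X"] proper_filter_empty[of U] by auto

lemma ultrafilter_Un_iff: "ultrafilter U \<Longrightarrow> X \<union> Y \<in> U \<longleftrightarrow> X \<in> U \<or> Y \<in> U"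
  using ultrafilter_Compl_iff[of U] proper_filter_Int_iff[OF ultrafilter_proper, of U "-X" "-Y"]
  by (metis Compl_Un double_compl)

lemma ultrafilter_UN:
  assumes "ultrafilter U" "finite J" "(\<Union>j\<in>J. X j) \<in> U"
  shows "\<exists>j\<in>J. X j \<in> U"
  using assms(2,3)
  by induction (auto simp: ultrafilter_Un_iff[OF assms(1)] proper_filter_empty ultrafilter_proper assms(1))

lemma ultrafilter_eqI:
  assumes "ultrafilter U" "proper_filter V" "U \<subseteq> V"
  shows "V = U"
proof
  show "V \<subseteq> U"
  proof
    fix X assume "X \<in> V"
    moreover have "X \<notin> U \<Longrightarrow> -X \<in> V" using assms ultrafilter_Compl_iff by blast
    ultimately show "X \<in> U"
      using assms(2) proper_filter_Int[of V X "-X"] proper_filter_empty by auto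
  qed
qed (use assms in auto)

lemma ultrafilter_vimage:
  assumes U: "ultrafilter U"
    and h: "h UNIV = UNIV" "\<And>X. h (-X) = - h X" "\<And>X Y. h (X \<inter> Y) = h X \<inter> h Y"
  shows "ultrafilter {X. h X \<in> U}"
proof -
  have PU: "proper_filter U" using U ultrafilter_proper by blast
  have "h {} = {}" using h(1) h(2)[of UNIV] by simp
  then have "{} \<notin> {X. h X \<in> U}" using PU proper_filter_empty by simp
  moreover have "UNIV \<in> {X. h X \<in> U}" using PU proper_filter_UNIV h(1) by simp
  moreover have "X \<inter> Y \<in> {X. h X \<in> U} \<longleftrightarrow> X \<in> {X. h X \<in> U} \<and> Y \<in> {X. h X \<in> U}" for X Y
    using proper_filter_Int_iff[OF PU] h(3) by simp
  moreover have "X \<in> {X. h X \<in> U} \<or> -X \<in> {X. h X \<in> U}" for X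
    using ultrafilter_Compl_iff[OF U] h(2) by simp
  ultimately show ?thesis
    unfolding ultrafilter_def proper_filter_def by (metis inf.absorb1)
qed

definition filter_join :: "'b set set \<Rightarrow> 'b set set \<Rightarrow> 'b set set" where
  "filter_join M N = {Z. \<exists>W\<in>M. \<exists>V\<in>N. W \<inter> V \<subseteq> Z}"

lemma proper_filter_join:
  assumes M: "proper_filter M" and N: "N \<noteq> {}" "\<And>V V'. V \<in> N \<Longrightarrow> V' \<in> N \<Longrightarrow> V \<inter> V' \<in> N"
    and disj: "\<And>W V. W \<in> M \<Longrightarrow> V \<in> N \<Longrightarrow> W \<inter> V \<noteq> {}"
  shows "proper_filter (filter_join M N)"
  unfolding proper_filter_def
proof (intro conjI allI ballI impI)
  show "UNIV \<in> filter_join M N"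
    using M N(1) proper_filter_UNIV unfolding filter_join_def by blast
  show "{} \<notin> filter_join M N"
    using disj unfolding filter_join_def by blast
next
  fix X Y assume "X \<in> filter_join M N \<and> X \<subseteq> Y"
  then show "Y \<in> filter_join M N" unfolding filter_join_def by blast
next
  fix X Y assume "X \<in> filter_join M N" "Y \<in> filter_join M N"
  then obtain W W' V V' where WV: "W \<in> M" "W' \<in> M" "V \<in> N" "V' \<in> N" "W \<inter> V \<subseteq> X" "W' \<inter> V' \<subseteq> Y"
    unfolding filter_join_def by blast
  then have "W \<inter> W' \<in> M" "V \<inter> V' \<in> N" "(W \<inter> W') \<inter> (V \<inter> V') \<subseteq> X \<inter> Y"
    using proper_filter_Int[OF M] N(2) by blast+
  then show "X \<inter> Y \<in> filter_join M N" unfolding filter_join_def by blast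
qed

lemma filter_join_upper1: "N \<noteq> {} \<Longrightarrow> M \<subseteq> filter_join M N"
  unfolding filter_join_def by auto

lemma filter_join_upper2: "UNIV \<in> M \<Longrightarrow> N \<subseteq> filter_join M N"
  unfolding filter_join_def by auto

lemma filter_join_least:
  assumes "proper_filter F" "M \<subseteq> F" "N \<subseteq> F"
  shows "filter_join M N \<subseteq> F"
proof
  fix Z assume "Z \<in> filter_join M N"
  then obtain W V where "W \<in> M" "V \<in> N" "W \<inter> V \<subseteq> Z"
    unfolding filter_join_def by blast
  then have "W \<inter> V \<in> F" using assms proper_filter_Int by blast
  then show "Z \<in> F" using \<open>W \<inter> V \<subseteq> Z\<close> assms(1) proper_filter_mono by blast
qed

lemma filter_join_single_proper:
  assumes "proper_filter F" "-A \<notin> F"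
  shows "proper_filter (filter_join F {A})"
proof (rule proper_filter_join)
  fix W V assume "W \<in> F" "V \<in> {A}"
  then show "W \<inter> V \<noteq> {}" using assms proper_filter_mono[of F W "-A"] by blast
qed (use assms in auto)

lemma proper_filter_Union_chain:
  assumes "C \<noteq> {}" and filters: "\<And>F. F \<in> C \<Longrightarrow> proper_filter F"
    and chain: "\<And>F G. F \<in> C \<Longrightarrow> G \<in> C \<Longrightarrow> F \<subseteq> G \<or> G \<subseteq> F"
  shows "proper_filter (\<Union>C)"
  unfolding proper_filter_def
proof (intro conjI allI ballI impI)
  show "UNIV \<in> \<Union>C" using assms(1) filters proper_filter_UNIV by blast
  show "{} \<notin> \<Union>C" using filters proper_filter_empty by blast
next
  fix X Y assume "X \<in> \<Union>C \<and> X \<subseteq> Y"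
  then show "Y \<in> \<Union>C" using filters proper_filter_mono by blast
next
  fix X Y assume "X \<in> \<Union>C" "Y \<in> \<Union>C"
  then obtain F G where FG: "F \<in> C" "G \<in> C" "X \<in> F" "Y \<in> G" by blast
  then have "X \<in> F \<union> G \<and> Y \<in> F \<union> G" "proper_filter (F \<union> G)"
    using chain[OF FG(1,2)] filters[OF FG(1)] filters[OF FG(2)] by (auto simp: sup.absorb1 sup.absorb2)
  then have "X \<inter> Y \<in> F \<union> G" using proper_filter_Int by blast
  then show "X \<inter> Y \<in> \<Union>C" using FG by blast
qed

lemma ultrafilter_extends:
  assumes "proper_filter F"
  shows "\<exists>U. ultrafilter U \<and> F \<subseteq> U"
proof -
  let ?A = "{G. proper_filter G \<and> F \<subseteq> G}"
  have "\<exists>M\<in>?A. \<forall>G\<in>?A. M \<subseteq> G \<longrightarrow> G = M"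
  proof (rule Zorn_Lemma2, intro ballI)
    fix C assume "C \<in> chains ?A"
    then have C: "C \<subseteq> ?A" and chain: "\<And>F G. F \<in> C \<Longrightarrow> G \<in> C \<Longrightarrow> F \<subseteq> G \<or> G \<subseteq> F"
      unfolding chains_def chain_subset_def by auto
    show "\<exists>U\<in>?A. \<forall>G\<in>C. G \<subseteq> U"
    proof (cases "C = {}")
      case False
      have "proper_filter (\<Union>C)"
        by (rule proper_filter_Union_chain[OF False]) (use C chain in auto)
      moreover have "F \<subseteq> \<Union>C" using False C by blast
      ultimately show ?thesis by blast
    qed (use assms in blast)
  qed
  then obtain M where "M \<in> ?A" and max: "\<And>G. G \<in> ?A \<Longrightarrow> M \<subseteq> G \<Longrightarrow> G = M"
    by auto
  then have M: "proper_filter M" "F \<subseteq> M" by auto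
  have "X \<in> M" if "-X \<notin> M" for X
  proof -
    have "M \<subseteq> filter_join M {X}" "X \<in> filter_join M {X}"
      using filter_join_upper1[of "{X}" M] filter_join_upper2[OF proper_filter_UNIV[OF M(1)], of "{X}"]
      by auto
    moreover have "filter_join M {X} \<in> ?A"
      using filter_join_single_proper[OF M(1) that] M(2) calculation(1) by simp
    ultimately show ?thesis using max by metis
  qed
  then show ?thesis using M unfolding ultrafilter_def by blast
qed

lemma proper_filter_mem_if_ultrafilters:
  assumes F: "proper_filter F" and all: "\<And>U. ultrafilter U \<Longrightarrow> F \<subseteq> U \<Longrightarrow> Y \<in> U"
  shows "Y \<in> F"
proof (rule ccontr)
  assume "Y \<notin> F"
  then have "proper_filter (filter_join F {-Y})"
    using filter_join_single_proper[OF F, of "-Y"] by simp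
  then obtain U where U: "ultrafilter U" and sub: "filter_join F {-Y} \<subseteq> U"
    using ultrafilter_extends by blast
  have "F \<subseteq> filter_join F {-Y}" "-Y \<in> filter_join F {-Y}"
    using filter_join_upper1[of "{-Y}" F] filter_join_upper2[OF proper_filter_UNIV[OF F], of "{-Y}"]
    by auto
  then have "Y \<in> U" "-Y \<in> U" using all[OF U] sub by blast+
  then show False using ultrafilter_Compl_iff[OF U] by blast
qed

declare Max_less_iff[simp del] Min_gr_iff[simp del] Max_le_iff[simp del] Min_ge_iff[simp del]

definition blocks :: "nat set set" where
  "blocks = {a. finite a \<and> a \<noteq> {}}"

definition blocks_above :: "nat \<Rightarrow> nat set set" where
  "blocks_above n = {a. finite a \<and> a \<noteq> {} \<and> n < Min a}"

definition block_shift :: "nat set set \<Rightarrow> nat set \<Rightarrow> nat set set" where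
  "block_shift X a = {b. a \<in> blocks \<and> b \<in> blocks \<and> Max a < Min b \<and> a \<union> b \<in> X}"

definition uf_shift :: "nat set set set \<Rightarrow> nat set set \<Rightarrow> nat set set" where
  "uf_shift q X = {a. block_shift X a \<in> q}"

definition uf_sum :: "nat set set set \<Rightarrow> nat set set set \<Rightarrow> nat set set set" where
  "uf_sum p q = {X. uf_shift q X \<in> p}"

definition block_ultrafilter :: "nat set set set \<Rightarrow> bool" where
  "block_ultrafilter p \<longleftrightarrow> ultrafilter p \<and> (\<forall>n. blocks_above n \<in> p)"

lemma blocks_above_subset: "blocks_above n \<subseteq> blocks"
  unfolding blocks_above_def blocks_def by auto

lemma blocks_above_antimono: "m \<le> n \<Longrightarrow> blocks_above n \<subseteq> blocks_above m"
  unfolding blocks_above_def by auto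

lemma blocks_above_nonempty: "blocks_above n \<noteq> {}"
  unfolding blocks_above_def by (auto intro!: exI[of _ "{Suc n}"])

lemma Min_le_Max_block: "a \<in> blocks \<Longrightarrow> Min a \<le> Max a"
  unfolding blocks_def by simp

lemma block_shift_Int: "block_shift (X \<inter> Y) a = block_shift X a \<inter> block_shift Y a"
  unfolding block_shift_def by auto

lemma block_shift_empty: "block_shift {} a = {}"
  unfolding block_shift_def by auto

lemma block_shift_UNIV: "a \<in> blocks \<Longrightarrow> block_shift UNIV a = blocks_above (Max a)"
  unfolding block_shift_def blocks_above_def blocks_def by auto

lemma block_shift_Compl: "a \<in> blocks \<Longrightarrow> block_shift (-X) a = blocks_above (Max a) - block_shift X a"
  unfolding block_shift_def blocks_above_def blocks_def by auto

lemma block_shift_Un: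
  assumes c: "c \<in> blocks" and a: "a \<in> blocks" and ca: "Max c < Min a"
  shows "block_shift (block_shift X c) a = block_shift X (c \<union> a)"
proof -
  have "Min a \<le> Max a" using a by (rule Min_le_Max_block)
  moreover have "Max (c \<union> a) = max (Max c) (Max a)"
    using c a unfolding blocks_def by (simp add: Max_Un)
  ultimately have Max_ca: "Max (c \<union> a) = Max a" using ca by simp
  have "b \<in> block_shift (block_shift X c) a \<longleftrightarrow> b \<in> block_shift X (c \<union> a)" for b
  proof (cases "b \<in> blocks \<and> Max a < Min b")
    case True
    then have "Min (a \<union> b) = min (Min a) (Min b)"
      using a unfolding blocks_def by (simp add: Min_Un)
    then have "Min (a \<union> b) = Min a" using \<open>Min a \<le> Max a\<close> True by simp
    moreover have "a \<union> b \<in> blocks" "c \<union> a \<in> blocks" using a c True unfolding blocks_def by auto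
    ultimately show ?thesis using True c a ca Max_ca unfolding block_shift_def by (simp add: Un_assoc)
  next
    case False
    then show ?thesis using Max_ca unfolding block_shift_def by auto
  qed
  then show ?thesis by blast
qed

lemma mem_uf_sum: "X \<in> uf_sum p q \<longleftrightarrow> uf_shift q X \<in> p"
  by (simp add: uf_sum_def)

lemma blocks_above_subset_block_shift:
  assumes a: "a \<in> blocks_above n"
  shows "blocks_above (Max a) \<subseteq> block_shift (blocks_above n) a"
proof
  fix b assume b: "b \<in> blocks_above (Max a)"
  have "Min a \<le> Max a" using a blocks_above_subset Min_le_Max_block by blast
  moreover have "Max a < Min b" using b unfolding blocks_above_def by simp
  ultimately have "Min a \<le> Min b" by linarith
  then have "a \<union> b \<in> blocks_above n" using a b unfolding blocks_above_def by (simp add: Min_Un)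
  then show "b \<in> block_shift (blocks_above n) a"
    using a b \<open>Max a < Min b\<close> blocks_above_subset unfolding block_shift_def by blast
qed

lemma block_ultrafilter_proper: "block_ultrafilter p \<Longrightarrow> proper_filter p"
  by (simp add: block_ultrafilter_def ultrafilter_proper)

lemma block_ultrafilter_blocks: "block_ultrafilter p \<Longrightarrow> blocks \<in> p"
  unfolding block_ultrafilter_def
  using blocks_above_subset proper_filter_mono ultrafilter_proper by metis

lemma block_shift_Compl_mem:
  assumes "block_ultrafilter q" "a \<in> blocks" "block_shift X a \<notin> q"
  shows "block_shift (-X) a \<in> q"
proof -
  have "-(block_shift X a) \<in> q"
    using assms block_ultrafilter_def ultrafilter_Compl_iff by blast
  moreover have "blocks_above (Max a) \<in> q" using assms(1) block_ultrafilter_def by blast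
  ultimately show ?thesis
    using block_shift_Compl[OF assms(2)] proper_filter_Int[OF block_ultrafilter_proper[OF assms(1)]]
    by (simp add: Diff_eq Int_commute)
qed

lemma uf_shift_Int: "proper_filter q \<Longrightarrow> uf_shift q (X \<inter> Y) = uf_shift q X \<inter> uf_shift q Y"
  unfolding uf_shift_def block_shift_Int by (auto simp: proper_filter_Int_iff)

lemma uf_shift_mono: "proper_filter q \<Longrightarrow> X \<subseteq> Y \<Longrightarrow> uf_shift q X \<subseteq> uf_shift q Y"
  by (metis inf.absorb_iff2 inf.cobounded1 uf_shift_Int)

lemma uf_shift_empty: "proper_filter q \<Longrightarrow> uf_shift q {} = {}"
  unfolding uf_shift_def block_shift_empty by (simp add: proper_filter_empty)

lemma proper_filter_uf_sum:
  assumes P: "proper_filter p" and Q: "proper_filter q" and "uf_shift q UNIV \<in> p"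
  shows "proper_filter (uf_sum p q)"
  unfolding proper_filter_def uf_sum_def mem_Collect_eq
proof (intro conjI allI ballI impI)
  show "uf_shift q UNIV \<in> p" by fact
  show "uf_shift q {} \<notin> p" using uf_shift_empty[OF Q] proper_filter_empty[OF P] by simp
next
  fix X Y assume "uf_shift q X \<in> p \<and> X \<subseteq> Y"
  then show "uf_shift q Y \<in> p" using uf_shift_mono[OF Q] proper_filter_mono[OF P] by metis
next
  fix X Y assume "X \<in> {X. uf_shift q X \<in> p}" "Y \<in> {X. uf_shift q X \<in> p}"
  then show "uf_shift q (X \<inter> Y) \<in> p"
    using uf_shift_Int[OF Q] proper_filter_Int[OF P] by simp
qed

lemma block_ultrafilter_uf_sum:
  assumes p: "block_ultrafilter p" and q: "block_ultrafilter q"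
  shows "block_ultrafilter (uf_sum p q)"
proof -
  have P: "proper_filter p" and Q: "proper_filter q"
    using p q block_ultrafilter_proper by auto
  have "blocks \<subseteq> uf_shift q UNIV"
    using q block_shift_UNIV unfolding uf_shift_def block_ultrafilter_def by auto
  then have "uf_shift q UNIV \<in> p"
    by (rule proper_filter_mono[OF P block_ultrafilter_blocks[OF p]])
  then have "proper_filter (uf_sum p q)" by (rule proper_filter_uf_sum[OF P Q])
  moreover have "X \<in> uf_sum p q \<or> -X \<in> uf_sum p q" for X
  proof -
    have "blocks \<subseteq> uf_shift q X \<union> uf_shift q (-X)"
      using block_shift_Compl_mem[OF q] unfolding uf_shift_def by blast
    then have "uf_shift q X \<union> uf_shift q (-X) \<in> p"
      by (rule proper_filter_mono[OF P block_ultrafilter_blocks[OF p]])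
    then show ?thesis
      unfolding uf_sum_def using ultrafilter_Un_iff p block_ultrafilter_def by blast
  qed
  moreover have "blocks_above n \<in> uf_sum p q" for n
  proof -
    have "blocks_above (Max a) \<in> q" for a using q block_ultrafilter_def by blast
    then have "block_shift (blocks_above n) a \<in> q" if "a \<in> blocks_above n" for a
      using proper_filter_mono[OF Q _ blocks_above_subset_block_shift[OF that]] by blast
    then have "blocks_above n \<subseteq> uf_shift q (blocks_above n)" unfolding uf_shift_def by blast
    moreover have "blocks_above n \<in> p" using p block_ultrafilter_def by blast
    ultimately show ?thesis unfolding uf_sum_def using proper_filter_mono[OF P] by simp
  qed
  ultimately show ?thesis unfolding block_ultrafilter_def ultrafilter_def by blast
qed

lemma block_shift_uf_shift:
  assumes "{} \<notin> s"
  shows "block_shift (uf_shift s X) c = uf_shift s (block_shift X c)"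
proof (intro set_eqI iffI)
  fix a assume "a \<in> block_shift (uf_shift s X) c"
  then have "c \<in> blocks" "a \<in> blocks" "Max c < Min a" "block_shift X (c \<union> a) \<in> s"
    unfolding block_shift_def uf_shift_def by auto
  then show "a \<in> uf_shift s (block_shift X c)"
    unfolding uf_shift_def by (simp add: block_shift_Un)
next
  fix a assume a: "a \<in> uf_shift s (block_shift X c)"
  then obtain b where "b \<in> block_shift (block_shift X c) a"
    using assms unfolding uf_shift_def by (metis all_not_in_conv mem_Collect_eq)
  then have c: "c \<in> blocks" "a \<in> blocks" "Max c < Min (a \<union> b)" "b \<in> blocks"
    unfolding block_shift_def by auto
  then have "Max c < Min a" unfolding blocks_def by (auto simp: Min_Un)
  then have "block_shift X (c \<union> a) \<in> s"
    using a c block_shift_Un[of c a X] unfolding uf_shift_def by simp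
  then have "c \<union> a \<in> uf_shift s X" unfolding uf_shift_def by simp
  then show "a \<in> block_shift (uf_shift s X) c"
    using c \<open>Max c < Min a\<close> unfolding block_shift_def[of "uf_shift s X"] by simp
qed

lemma uf_sum_assoc:
  assumes "{} \<notin> s"
  shows "uf_sum (uf_sum p q) s = uf_sum p (uf_sum q s)"
proof -
  have "uf_shift (uf_sum q s) X = uf_shift q (uf_shift s X)" for X
  proof -
    have "uf_shift (uf_sum q s) X = {c. uf_shift s (block_shift X c) \<in> q}"
      unfolding uf_shift_def[of "uf_sum q s"] by (simp add: uf_sum_def)
    also have "\<dots> = uf_shift q (uf_shift s X)"
      by (simp add: uf_shift_def[of q] block_shift_uf_shift[OF assms])
    finally show ?thesis .
  qed
  then show ?thesis by (intro set_eqI) (simp add: mem_uf_sum)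
qed

definition tail_filter :: "nat set set set" where
  "tail_filter = {Z. \<exists>n. blocks_above n \<subseteq> Z}"

lemma proper_filter_tail_filter: "proper_filter tail_filter"
  unfolding proper_filter_def tail_filter_def
proof (intro conjI allI ballI impI)
  fix X Y assume "X \<in> {Z. \<exists>n. blocks_above n \<subseteq> Z}" "Y \<in> {Z. \<exists>n. blocks_above n \<subseteq> Z}"
  then obtain m n where "blocks_above m \<subseteq> X" "blocks_above n \<subseteq> Y" by blast
  then have "blocks_above (max m n) \<subseteq> X \<inter> Y"
    using blocks_above_antimono[of m "max m n"] blocks_above_antimono[of n "max m n"] by auto
  then show "X \<inter> Y \<in> {Z. \<exists>n. blocks_above n \<subseteq> Z}" by blast
qed (use blocks_above_nonempty in auto)

lemma blocks_mem_tail_filter: "blocks \<in> tail_filter"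
  unfolding tail_filter_def using blocks_above_subset by blast

lemma block_ultrafilter_iff: "block_ultrafilter p \<longleftrightarrow> ultrafilter p \<and> tail_filter \<subseteq> p"
proof
  assume p: "block_ultrafilter p"
  have "Z \<in> p" if "blocks_above n \<subseteq> Z" for n Z
    using that p proper_filter_mono[OF block_ultrafilter_proper[OF p]] block_ultrafilter_def by blast
  then show "ultrafilter p \<and> tail_filter \<subseteq> p"
    using p block_ultrafilter_def unfolding tail_filter_def by blast
qed (auto simp: block_ultrafilter_def tail_filter_def)

text \<open>The ultrafilters containing a proper filter F form a closed subset of the Stone-Cech
  compactification; F is a semigroup filter iff that set is a subsemigroup.
  A maximal semigroup filter thus describes a minimal closed subsemigroup, which Ellis's argument
  shows to consist of a single idempotent.\<close>

definition semigroup_filter :: "nat set set set \<Rightarrow> bool" where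
  "semigroup_filter F \<longleftrightarrow> proper_filter F \<and> tail_filter \<subseteq> F \<and>
     (\<forall>q1 q2. ultrafilter q1 \<longrightarrow> F \<subseteq> q1 \<longrightarrow> ultrafilter q2 \<longrightarrow> F \<subseteq> q2 \<longrightarrow> F \<subseteq> uf_sum q1 q2)"

lemma semigroup_filter_tail_filter: "semigroup_filter tail_filter"
  unfolding semigroup_filter_def
  using proper_filter_tail_filter block_ultrafilter_iff block_ultrafilter_uf_sum by blast

lemma uf_shift_image_Int:
  assumes "proper_filter p" "proper_filter r" "V \<in> uf_shift p ` r" "V' \<in> uf_shift p ` r"
  shows "V \<inter> V' \<in> uf_shift p ` r"
proof -
  obtain X X' where "X \<in> r" "X' \<in> r" "V = uf_shift p X" "V' = uf_shift p X'"
    using assms(3,4) by blast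
  then show ?thesis using uf_shift_Int[OF assms(1)] proper_filter_Int[OF assms(2)] by (metis image_eqI)
qed

lemma uf_sum_eq_if_uf_shift_subset:
  assumes "block_ultrafilter q" "block_ultrafilter p" "ultrafilter r" "uf_shift p ` r \<subseteq> q"
  shows "uf_sum q p = r"
proof (rule ultrafilter_eqI[OF assms(3)])
  show "proper_filter (uf_sum q p)"
    using block_ultrafilter_uf_sum[OF assms(1,2)] block_ultrafilter_proper by blast
  show "r \<subseteq> uf_sum q p" using assms(4) by (auto simp: mem_uf_sum)
qed

text \<open>In the compactification: r lies in the closure of M + p as soon as every set X
  with X - p in M belongs to r.\<close>

lemma uf_sum_eq_exists:
  assumes M: "proper_filter M" "tail_filter \<subseteq> M" and p: "block_ultrafilter p"
    and r: "ultrafilter r" and shift: "\<And>X. uf_shift p X \<in> M \<Longrightarrow> X \<in> r"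
  shows "\<exists>q. ultrafilter q \<and> M \<subseteq> q \<and> uf_sum q p = r"
proof -
  have P: "proper_filter p" and R: "proper_filter r"
    using p r block_ultrafilter_proper ultrafilter_proper by auto
  let ?N = "uf_shift p ` r"
  have "proper_filter (filter_join M ?N)"
  proof (rule proper_filter_join[OF M(1)])
    show "?N \<noteq> {}" using proper_filter_UNIV[OF R] by blast
    show "V \<inter> V' \<in> ?N" if "V \<in> ?N" "V' \<in> ?N" for V V'
      using uf_shift_image_Int[OF P R that] .
  next
    fix W V assume W: "W \<in> M" and "V \<in> ?N"
    then obtain X where X: "X \<in> r" "V = uf_shift p X" by blast
    show "W \<inter> V \<noteq> {}"
    proof
      assume "W \<inter> V = {}"
      then have "W \<inter> blocks \<subseteq> uf_shift p (-X)"
        using block_shift_Compl_mem[OF p] X(2) unfolding uf_shift_def by blast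
      moreover have "W \<inter> blocks \<in> M"
        using W M blocks_mem_tail_filter proper_filter_Int by blast
      ultimately have "-X \<in> r" using shift proper_filter_mono[OF M(1)] by metis
      then show False using X(1) ultrafilter_Compl_iff[OF r] by blast
    qed
  qed
  then obtain q where q: "ultrafilter q" "filter_join M ?N \<subseteq> q"
    using ultrafilter_extends by blast
  have "M \<subseteq> q" "?N \<subseteq> q"
    using q(2) filter_join_upper1[of ?N M] filter_join_upper2[OF proper_filter_UNIV[OF M(1)], of ?N]
      proper_filter_UNIV[OF R] by auto
  moreover have "block_ultrafilter q" using q(1) \<open>M \<subseteq> q\<close> M(2) block_ultrafilter_iff by blast
  ultimately show ?thesis using q(1) uf_sum_eq_if_uf_shift_subset[OF _ p r] by blast
qed

lemma maximal_semigroup_filter_exists: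
  "\<exists>M. semigroup_filter M \<and> (\<forall>F. semigroup_filter F \<longrightarrow> M \<subseteq> F \<longrightarrow> F = M)"
proof -
  let ?A = "{F. semigroup_filter F}"
  have "\<exists>M\<in>?A. \<forall>F\<in>?A. M \<subseteq> F \<longrightarrow> F = M"
  proof (rule Zorn_Lemma2, intro ballI)
    fix C assume "C \<in> chains ?A"
    then have C: "\<And>F. F \<in> C \<Longrightarrow> semigroup_filter F"
      and chain: "\<And>F G. F \<in> C \<Longrightarrow> G \<in> C \<Longrightarrow> F \<subseteq> G \<or> G \<subseteq> F"
      unfolding chains_def chain_subset_def by auto
    show "\<exists>U\<in>?A. \<forall>F\<in>C. F \<subseteq> U"
    proof (cases "C = {}")
      case True
      then show ?thesis using semigroup_filter_tail_filter by blast
    next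
      case False
      have "proper_filter (\<Union>C)"
        by (rule proper_filter_Union_chain[OF False]) (use C chain semigroup_filter_def in auto)
      moreover have "tail_filter \<subseteq> \<Union>C" using False C semigroup_filter_def by blast
      moreover have "\<Union>C \<subseteq> uf_sum q1 q2"
        if "ultrafilter q1" "\<Union>C \<subseteq> q1" "ultrafilter q2" "\<Union>C \<subseteq> q2" for q1 q2
      proof -
        have "F \<subseteq> uf_sum q1 q2" if "F \<in> C" for F
          using C[OF \<open>F \<in> C\<close>] \<open>F \<in> C\<close> \<open>ultrafilter q1\<close> \<open>\<Union>C \<subseteq> q1\<close> \<open>ultrafilter q2\<close> \<open>\<Union>C \<subseteq> q2\<close>
          unfolding semigroup_filter_def by blast
        then show ?thesis by blast
      qed
      ultimately have "semigroup_filter (\<Union>C)" unfolding semigroup_filter_def by blast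
      then show ?thesis by blast
    qed
  qed
  then show ?thesis by auto
qed

lemma semigroup_filter_subset_uf_sum:
  assumes M: "semigroup_filter M" and p: "ultrafilter p" "M \<subseteq> p"
  shows "M \<subseteq> uf_sum M p"
proof
  fix X assume "X \<in> M"
  have "uf_shift p X \<in> M"
  proof (rule proper_filter_mem_if_ultrafilters)
    show "proper_filter M" using M semigroup_filter_def by blast
    fix U assume "ultrafilter U" "M \<subseteq> U"
    then have "M \<subseteq> uf_sum U p" using M p unfolding semigroup_filter_def by blast
    then show "uf_shift p X \<in> U" using \<open>X \<in> M\<close> mem_uf_sum by blast
  qed
  then show "X \<in> uf_sum M p" by (simp add: mem_uf_sum)
qed

lemma maximal_semigroup_filter_uf_sum:
  assumes M: "semigroup_filter M" and max: "\<And>F. semigroup_filter F \<Longrightarrow> M \<subseteq> F \<Longrightarrow> F = M"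
    and p: "ultrafilter p" "M \<subseteq> p"
  shows "uf_sum M p = M"
proof (rule max)
  have PM: "proper_filter M" and M0: "tail_filter \<subseteq> M"
    and sg: "\<And>q1 q2. ultrafilter q1 \<Longrightarrow> M \<subseteq> q1 \<Longrightarrow> ultrafilter q2 \<Longrightarrow> M \<subseteq> q2 \<Longrightarrow> M \<subseteq> uf_sum q1 q2"
    using M unfolding semigroup_filter_def by blast+
  have bp: "block_ultrafilter p" using p M0 block_ultrafilter_iff by blast
  have P: "proper_filter p" using p(1) ultrafilter_proper by blast
  show MG: "M \<subseteq> uf_sum M p" by (rule semigroup_filter_subset_uf_sum[OF M p])
  have "proper_filter (uf_sum M p)"
    using proper_filter_uf_sum[OF PM P] MG proper_filter_UNIV[OF PM] mem_uf_sum by blast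
  moreover have "uf_sum M p \<subseteq> uf_sum q1 q2"
    if q: "ultrafilter q1" "uf_sum M p \<subseteq> q1" "ultrafilter q2" "uf_sum M p \<subseteq> q2" for q1 q2
  proof -
    have "X \<in> q1" "X \<in> q2" if "uf_shift p X \<in> M" for X
      using that q(2,4) by (auto simp: mem_uf_sum)
    then obtain s1 s2 where s1: "ultrafilter s1" "M \<subseteq> s1" "uf_sum s1 p = q1"
      and s2: "ultrafilter s2" "M \<subseteq> s2" "uf_sum s2 p = q2"
      using uf_sum_eq_exists[OF PM M0 bp q(1)] uf_sum_eq_exists[OF PM M0 bp q(3)] by metis
    have "block_ultrafilter s1" using s1 M0 block_ultrafilter_iff by blast
    then have bs1p: "block_ultrafilter (uf_sum s1 p)" using block_ultrafilter_uf_sum bp by blast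
    have "M \<subseteq> uf_sum s1 p" using sg s1 p by blast
    then have "M \<subseteq> uf_sum (uf_sum s1 p) s2"
      using sg bs1p block_ultrafilter_def s2 by blast
    then have "uf_sum M p \<subseteq> uf_sum (uf_sum (uf_sum s1 p) s2) p" by (auto simp: mem_uf_sum)
    also have "\<dots> = uf_sum q1 q2"
      using s1(3) s2(3) uf_sum_assoc[of p "uf_sum s1 p" s2] proper_filter_empty[OF P] by simp
    finally show ?thesis .
  qed
  ultimately show "semigroup_filter (uf_sum M p)" using MG M0 unfolding semigroup_filter_def by blast
qed

lemma semigroup_filter_join_uf_shift:
  assumes M: "semigroup_filter M" and p: "ultrafilter p" "M \<subseteq> p"
    and shift: "\<And>X. uf_shift p X \<in> M \<Longrightarrow> X \<in> p"
  shows "semigroup_filter (filter_join M (uf_shift p ` p))"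
  unfolding semigroup_filter_def
proof (intro conjI allI impI)
  have PM: "proper_filter M" and M0: "tail_filter \<subseteq> M"
    and sg: "\<And>q1 q2. ultrafilter q1 \<Longrightarrow> M \<subseteq> q1 \<Longrightarrow> ultrafilter q2 \<Longrightarrow> M \<subseteq> q2 \<Longrightarrow> M \<subseteq> uf_sum q1 q2"
    using M unfolding semigroup_filter_def by blast+
  have bp: "block_ultrafilter p" using p M0 block_ultrafilter_iff by blast
  have P: "proper_filter p" using p(1) ultrafilter_proper by blast
  let ?N = "uf_shift p ` p"
  let ?F = "filter_join M ?N"
  have N: "?N \<noteq> {}" using proper_filter_UNIV[OF P] by blast
  then have MF: "M \<subseteq> ?F" by (rule filter_join_upper1)
  have NF: "?N \<subseteq> ?F" using filter_join_upper2[OF proper_filter_UNIV[OF PM]] by blast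
  obtain q where q: "ultrafilter q" "M \<subseteq> q" "uf_sum q p = p"
    using uf_sum_eq_exists[OF PM M0 bp p(1) shift] by blast
  have "?N \<subseteq> q" using q(3) by (auto simp: mem_uf_sum)
  show "proper_filter ?F"
  proof (rule proper_filter_join[OF PM])
    show "?N \<noteq> {}" by (rule N)
    show "V \<inter> V' \<in> ?N" if "V \<in> ?N" "V' \<in> ?N" for V V'
      using uf_shift_image_Int[OF P P that] .
    fix W V assume "W \<in> M" "V \<in> ?N"
    then have "W \<inter> V \<in> q"
      using q(2) \<open>?N \<subseteq> q\<close> proper_filter_Int[OF ultrafilter_proper[OF q(1)]] by blast
    then show "W \<inter> V \<noteq> {}" using proper_filter_nonempty[OF ultrafilter_proper[OF q(1)]] by blast
  qed
  show "tail_filter \<subseteq> ?F" using M0 MF by blast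
  fix q1 q2 assume q12: "ultrafilter q1" "?F \<subseteq> q1" "ultrafilter q2" "?F \<subseteq> q2"
  have bq: "block_ultrafilter q1" "block_ultrafilter q2"
    using q12 MF M0 unfolding block_ultrafilter_iff by (meson order_trans)+
  have "?N \<subseteq> q1" "?N \<subseteq> q2" using NF q12(2,4) by auto
  then have "uf_sum q1 p = p" "uf_sum q2 p = p"
    using uf_sum_eq_if_uf_shift_subset[OF _ bp p(1)] bq by blast+
  then have "uf_sum (uf_sum q1 q2) p = p"
    using uf_sum_assoc[of p q1 q2] proper_filter_empty[OF P] by simp
  then have "?N \<subseteq> uf_sum q1 q2" by (auto simp: mem_uf_sum)
  moreover have "proper_filter (uf_sum q1 q2)"
    using block_ultrafilter_uf_sum[OF bq] block_ultrafilter_proper by blast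
  moreover have "M \<subseteq> uf_sum q1 q2" using sg[OF q12(1) _ q12(3)] MF q12(2,4) by (meson order_trans)
  ultimately show "?F \<subseteq> uf_sum q1 q2" by (intro filter_join_least)
qed

lemma idempotent_ultrafilter_exists: "\<exists>p. block_ultrafilter p \<and> uf_sum p p = p"
proof -
  obtain M where M: "semigroup_filter M" and max: "\<And>F. semigroup_filter F \<Longrightarrow> M \<subseteq> F \<Longrightarrow> F = M"
    using maximal_semigroup_filter_exists by blast
  have PM: "proper_filter M" and M0: "tail_filter \<subseteq> M"
    using M unfolding semigroup_filter_def by blast+
  obtain p where p: "ultrafilter p" "M \<subseteq> p" using ultrafilter_extends[OF PM] by blast
  have bp: "block_ultrafilter p" using p M0 block_ultrafilter_iff by blast
  have "uf_shift p X \<in> M \<Longrightarrow> X \<in> p" for X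
    using maximal_semigroup_filter_uf_sum[OF M max p] mem_uf_sum p(2) by blast
  then have "semigroup_filter (filter_join M (uf_shift p ` p))"
    by (rule semigroup_filter_join_uf_shift[OF M p])
  moreover have "M \<subseteq> filter_join M (uf_shift p ` p)"
    by (rule filter_join_upper1) (use proper_filter_UNIV[OF ultrafilter_proper[OF p(1)]] in blast)
  ultimately have "filter_join M (uf_shift p ` p) = M" by (rule max)
  moreover have "uf_shift p ` p \<subseteq> filter_join M (uf_shift p ` p)"
    by (rule filter_join_upper2[OF proper_filter_UNIV[OF PM]])
  ultimately have "uf_shift p ` p \<subseteq> p" using p(2) by blast
  then have "uf_sum p p = p" by (rule uf_sum_eq_if_uf_shift_subset[OF bp bp p(1)])
  then show ?thesis using bp by blast
qed

definition increasing_blocks :: "(nat \<Rightarrow> nat set) \<Rightarrow> bool" where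
  "increasing_blocks A \<longleftrightarrow> (\<forall>n. A n \<in> blocks_above 0 \<and> Max (A n) < Min (A (Suc n)))"

lemma increasing_blocks_less:
  assumes A: "increasing_blocks A" and "i < j" "u \<in> A i" "v \<in> A j"
  shows "u < v"
proof -
  have blocks: "A n \<in> blocks" for n
    using A blocks_above_subset unfolding increasing_blocks_def by blast
  have step: "Max (A n) < Min (A (Suc n))" for n
    using A unfolding increasing_blocks_def by blast
  have "Min (A n) \<le> Min (A (Suc n))" for n
    using Min_le_Max_block[OF blocks] step[of n] by (meson le_less_trans less_imp_le)
  then have "Min (A (Suc i)) \<le> Min (A j)"
    using lift_Suc_mono_le[of "\<lambda>n. Min (A n)"] \<open>i < j\<close> by (simp add: Suc_le_eq)
  moreover have "u \<le> Max (A i)" "Min (A j) \<le> v"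
    using blocks assms(3,4) unfolding blocks_def by simp_all
  ultimately show ?thesis using step[of i] by linarith
qed

definition uf_star :: "nat set set set \<Rightarrow> nat set set \<Rightarrow> nat set set" where
  "uf_star p Y = Y \<inter> uf_shift p Y"

lemma uf_star_mem:
  assumes "proper_filter p" "uf_sum p p = p" "Y \<in> p"
  shows "uf_star p Y \<in> p"
  using assms proper_filter_Int mem_uf_sum unfolding uf_star_def by metis

lemma block_shift_uf_star_mem:
  assumes P: "proper_filter p" and idem: "uf_sum p p = p" and a: "a \<in> uf_star p Y"
  shows "block_shift (uf_star p Y) a \<in> p"
proof -
  have Ya: "block_shift Y a \<in> p" using a unfolding uf_star_def uf_shift_def by simp
  then have "uf_shift p (block_shift Y a) \<in> p" using idem mem_uf_sum by metis
  then have "block_shift (uf_shift p Y) a \<in> p"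
    using block_shift_uf_shift proper_filter_empty[OF P] by metis
  then show ?thesis
    using Ya proper_filter_Int[OF P] unfolding uf_star_def block_shift_Int by blast
qed

text \<open>The Galvin-Glazer construction: Z (n + 1) is the star of Z n \<inter> (Z n - A n) \<inter> (blocks after
  A n), and A (n + 1) is any of its elements.\<close>

lemma uf_star_chain_exists:
  assumes p: "block_ultrafilter p" and idem: "uf_sum p p = p" and Y: "Y \<in> p"
  shows "\<exists>A Z. \<forall>n. A n \<in> Z n \<and> Z n \<subseteq> Y \<inter> blocks_above 0 \<and>
     Z (Suc n) \<subseteq> Z n \<inter> block_shift (Z n) (A n) \<inter> blocks_above (Max (A n))"
proof -
  have P: "proper_filter p" using p block_ultrafilter_proper by blast
  define adm where "adm Z \<longleftrightarrow> Z \<in> p \<and> Z \<subseteq> Y \<inter> blocks_above 0 \<and> (\<forall>b\<in>Z. block_shift Z b \<in> p)"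
    for Z
  have adm_star: "\<exists>x. (fst x \<in> snd x \<and> adm (snd x)) \<and> snd x \<subseteq> W"
    if W: "W \<in> p" "W \<subseteq> Y \<inter> blocks_above 0" for W
  proof -
    have "uf_star p W \<in> p" using uf_star_mem[OF P idem W(1)] .
    then obtain a where "a \<in> uf_star p W" using proper_filter_nonempty[OF P] by blast
    moreover have "uf_star p W \<subseteq> W" unfolding uf_star_def by blast
    moreover have "\<forall>b\<in>uf_star p W. block_shift (uf_star p W) b \<in> p"
      using block_shift_uf_star_mem[OF P idem] by blast
    ultimately have "(a \<in> uf_star p W \<and> adm (uf_star p W)) \<and> uf_star p W \<subseteq> W"
      using \<open>uf_star p W \<in> p\<close> W(2) unfolding adm_def by blast
    then show ?thesis by (intro exI[of _ "(a, uf_star p W)"]) simp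
  qed
  have "Y \<inter> blocks_above 0 \<in> p"
    using proper_filter_Int[OF P Y] p block_ultrafilter_def by blast
  then have start: "\<exists>x. fst x \<in> snd x \<and> adm (snd x)" using adm_star by blast
  have step: "\<exists>y. (fst y \<in> snd y \<and> adm (snd y)) \<and>
      snd y \<subseteq> snd x \<inter> block_shift (snd x) (fst x) \<inter> blocks_above (Max (fst x))"
    if x: "fst x \<in> snd x \<and> adm (snd x)" for x
  proof (rule adm_star)
    show "snd x \<inter> block_shift (snd x) (fst x) \<inter> blocks_above (Max (fst x)) \<in> p"
      using x p proper_filter_Int[OF P] unfolding adm_def block_ultrafilter_def by simp
    show "snd x \<inter> block_shift (snd x) (fst x) \<inter> blocks_above (Max (fst x)) \<subseteq> Y \<inter> blocks_above 0"
      using x unfolding adm_def by blast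
  qed
  obtain f where f: "\<forall>n. (fst (f n) \<in> snd (f n) \<and> adm (snd (f n))) \<and>
      snd (f (Suc n)) \<subseteq> snd (f n) \<inter> block_shift (snd (f n)) (fst (f n)) \<inter> blocks_above (Max (fst (f n)))"
    using dependent_nat_choice[of "\<lambda>_ x. fst x \<in> snd x \<and> adm (snd x)"
        "\<lambda>_ x y. snd y \<subseteq> snd x \<inter> block_shift (snd x) (fst x) \<inter> blocks_above (Max (fst x))"]
      start step by blast
  then show ?thesis unfolding adm_def by (intro exI[of _ "\<lambda>n. fst (f n)"] exI[of _ "\<lambda>n. snd (f n)"]) blast
qed

lemma finite_unions_blocks_exist:
  assumes p: "block_ultrafilter p" and idem: "uf_sum p p = p" and Y: "Y \<in> p"
  shows "\<exists>A. increasing_blocks A \<and> (\<forall>F. finite F \<and> F \<noteq> {} \<longrightarrow> (\<Union>i\<in>F. A i) \<in> Y)"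
proof -
  obtain A Z where AZ: "\<And>n. A n \<in> Z n" and Z: "\<And>n. Z n \<subseteq> Y \<inter> blocks_above 0"
    and Z_next: "\<And>n. Z (Suc n) \<subseteq> Z n \<inter> block_shift (Z n) (A n) \<inter> blocks_above (Max (A n))"
    using uf_star_chain_exists[OF assms] by blast
  have Z_antimono: "Z n \<subseteq> Z m" if "m \<le> n" for m n
    by (rule lift_Suc_antimono_le[of Z, OF _ that]) (use Z_next in blast)
  have union: "(\<Union>i\<in>F. A i) \<in> Z (Min F)" if "finite F" "F \<noteq> {}" for F
    using that
  proof (induction F rule: finite_linorder_min_induct)
    case (insert b F)
    show ?case
    proof (cases "F = {}")
      case True
      then show ?thesis using AZ by simp
    next
      case False
      have "Min (insert b F) = b" using insert.hyps False by (simp add: Min_insert2 less_imp_le)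
      moreover have "Suc b \<le> Min F" using insert.hyps False by (simp add: Suc_le_eq)
      then have "(\<Union>i\<in>F. A i) \<in> Z (Suc b)"
        using insert.IH[OF False] Z_antimono[of "Suc b" "Min F"] by blast
      then have "(\<Union>i\<in>F. A i) \<in> block_shift (Z b) (A b)" using Z_next[of b] by blast
      then have "A b \<union> (\<Union>i\<in>F. A i) \<in> Z b" unfolding block_shift_def by simp
      ultimately show ?thesis by simp
    qed
  qed simp
  have "increasing_blocks A"
    unfolding increasing_blocks_def
  proof
    fix n
    have "A (Suc n) \<in> blocks_above (Max (A n))" using AZ[of "Suc n"] Z_next[of n] by blast
    moreover have "A n \<in> blocks_above 0" using AZ[of n] Z[of n] by blast
    ultimately show "A n \<in> blocks_above 0 \<and> Max (A n) < Min (A (Suc n))"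
      unfolding blocks_above_def by blast
  qed
  moreover have "(\<Union>i\<in>F. A i) \<in> Y" if "finite F" "F \<noteq> {}" for F
    using union[OF that] Z[of "Min F"] by blast
  ultimately show ?thesis by blast
qed

text \<open>The (k + 1)-fold tensor power of p, on lists of length k + 1: X belongs to it iff
  for p-almost all a_0, ..., for p-almost all a_k, the list [a_0, ..., a_k] lies in X.\<close>

primrec tensor_power :: "'b set set \<Rightarrow> nat \<Rightarrow> 'b list set set" where
  "tensor_power p 0 = {X. {a. [a] \<in> X} \<in> p}"
| "tensor_power p (Suc k) = {X. {a. {t. a # t \<in> X} \<in> tensor_power p k} \<in> p}"

lemma ultrafilter_tensor_power: "ultrafilter p \<Longrightarrow> ultrafilter (tensor_power p k)"
proof (induction k)
  case 0
  show ?case unfolding tensor_power.simps by (rule ultrafilter_vimage[OF 0]) auto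
next
  case (Suc k)
  let ?T = "tensor_power p k"
  have T: "ultrafilter ?T" by (rule Suc.IH[OF Suc.prems])
  let ?h = "\<lambda>X. {a. {t. a # t \<in> X} \<in> ?T}"
  have "ultrafilter {X. ?h X \<in> p}"
  proof (rule ultrafilter_vimage[OF Suc.prems])
    show "?h UNIV = UNIV" using proper_filter_UNIV[OF ultrafilter_proper[OF T]] by simp
    show "?h (-X) = - ?h X" for X
    proof -
      have "{t. a # t \<in> -X} = -{t. a # t \<in> X}" for a by auto
      then show ?thesis using ultrafilter_Compl_iff[OF T] by auto
    qed
    show "?h (X \<inter> Y) = ?h X \<inter> ?h Y" for X Y
    proof -
      have "{t. a # t \<in> X \<inter> Y} = {t. a # t \<in> X} \<inter> {t. a # t \<in> Y}" for a by auto
      then show ?thesis using proper_filter_Int_iff[OF ultrafilter_proper[OF T]] by auto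
    qed
  qed
  then show ?case by simp
qed

text \<open>The configuration sought in the theorem, at the level of blocks: k + 1 increasing block
  sequences such that every list of unions, over nonempty sets of indices below m in the first
  k coordinates and over arbitrary finite nonempty sets in the last one, lies in X.\<close>

definition product_blocks_in :: "nat \<Rightarrow> nat \<Rightarrow> (nat \<Rightarrow> nat \<Rightarrow> nat set) \<Rightarrow> nat set list set \<Rightarrow> bool" where
  "product_blocks_in m k B X \<longleftrightarrow> (\<forall>i. increasing_blocks (B i)) \<and>
     (\<forall>Fs. (\<forall>i<k. Fs i \<noteq> {} \<and> Fs i \<subseteq> {..<m}) \<and> Fs k \<noteq> {} \<and> finite (Fs k)
        \<longrightarrow> map (\<lambda>i. \<Union>n\<in>Fs i. B i n) [0..<Suc k] \<in> X)"

lemma product_blocks_in_Cons: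
  assumes A: "increasing_blocks A" and B: "product_blocks_in m k B X'"
    and X': "\<And>F. F \<noteq> {} \<Longrightarrow> F \<subseteq> {..<m} \<Longrightarrow> X' \<subseteq> {t. (\<Union>n\<in>F. A n) # t \<in> X}"
  shows "product_blocks_in m (Suc k) (\<lambda>i. if i = 0 then A else B (i - 1)) X"
  unfolding product_blocks_in_def
proof (intro conjI allI impI)
  show "increasing_blocks (if i = 0 then A else B (i - 1))" for i
    using A B unfolding product_blocks_in_def by simp
  fix Fs assume Fs: "(\<forall>i<Suc k. Fs i \<noteq> {} \<and> Fs i \<subseteq> {..<m}) \<and> Fs (Suc k) \<noteq> {} \<and> finite (Fs (Suc k))"
  have "\<forall>Fs. (\<forall>i<k. Fs i \<noteq> {} \<and> Fs i \<subseteq> {..<m}) \<and> Fs k \<noteq> {} \<and> finite (Fs k)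
      \<longrightarrow> map (\<lambda>i. \<Union>n\<in>Fs i. B i n) [0..<Suc k] \<in> X'"
    using B unfolding product_blocks_in_def by blast
  from this[rule_format, of "\<lambda>i. Fs (Suc i)"] have "map (\<lambda>i. \<Union>n\<in>Fs (Suc i). B i n) [0..<Suc k] \<in> X'"
    using Fs by simp
  then have "(\<Union>n\<in>Fs 0. A n) # map (\<lambda>i. \<Union>n\<in>Fs (Suc i). B i n) [0..<Suc k] \<in> X"
    using X'[of "Fs 0"] Fs by blast
  moreover have "map (\<lambda>i. \<Union>n\<in>Fs i. (if i = 0 then A else B (i - 1)) n) [0..<Suc (Suc k)] =
      (\<Union>n\<in>Fs 0. A n) # map (\<lambda>i. \<Union>n\<in>Fs (Suc i). B i n) [0..<Suc k]"
    unfolding map_upt_Suc[of _ "Suc k"] by simp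
  ultimately show "map (\<lambda>i. \<Union>n\<in>Fs i. (if i = 0 then A else B (i - 1)) n) [0..<Suc (Suc k)] \<in> X"
    by (simp only:)
qed

lemma tensor_power_product_blocks:
  assumes p: "block_ultrafilter p" and idem: "uf_sum p p = p"
  shows "X \<in> tensor_power p k \<Longrightarrow> \<exists>B. product_blocks_in m k B X"
proof (induction k arbitrary: X)
  case 0
  then have "{a. [a] \<in> X} \<in> p" by simp
  then obtain A where "increasing_blocks A"
    and "\<forall>F. finite F \<and> F \<noteq> {} \<longrightarrow> (\<Union>i\<in>F. A i) \<in> {a. [a] \<in> X}"
    using finite_unions_blocks_exist[OF p idem] by blast
  then have "product_blocks_in m 0 (\<lambda>_. A) X" unfolding product_blocks_in_def by auto
  then show ?case by blast
next
  case (Suc k)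
  let ?T = "tensor_power p k"
  have T: "proper_filter ?T" using ultrafilter_tensor_power p block_ultrafilter_def ultrafilter_proper by blast
  have "{a. {t. a # t \<in> X} \<in> ?T} \<in> p" using Suc.prems by simp
  then obtain A where A: "increasing_blocks A"
    and "\<forall>F. finite F \<and> F \<noteq> {} \<longrightarrow> (\<Union>n\<in>F. A n) \<in> {a. {t. a # t \<in> X} \<in> ?T}"
    using finite_unions_blocks_exist[OF p idem] by blast
  then have A_FU: "\<And>F. finite F \<Longrightarrow> F \<noteq> {} \<Longrightarrow> {t. (\<Union>n\<in>F. A n) # t \<in> X} \<in> ?T"
    by blast
  define X' where "X' = (\<Inter>F\<in>{F. F \<noteq> {} \<and> F \<subseteq> {..<m}}. {t. (\<Union>n\<in>F. A n) # t \<in> X})"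
  have "X' \<in> ?T"
    unfolding X'_def
  proof (rule proper_filter_INT[OF T])
    show "finite {F. F \<noteq> {} \<and> F \<subseteq> {..<m}}"
      by (rule finite_subset[of _ "Pow {..<m}"]) auto
    show "\<forall>F\<in>{F. F \<noteq> {} \<and> F \<subseteq> {..<m}}. {t. (\<Union>n\<in>F. A n) # t \<in> X} \<in> ?T"
    proof
      fix F assume "F \<in> {F. F \<noteq> {} \<and> F \<subseteq> {..<m}}"
      then have "finite F" "F \<noteq> {}" using finite_subset[OF _ finite_lessThan] by auto
      then show "{t. (\<Union>n\<in>F. A n) # t \<in> X} \<in> ?T" by (rule A_FU)
    qed
  qed
  then obtain B where B: "product_blocks_in m k B X'" using Suc.IH by blast
  have "X' \<subseteq> {t. (\<Union>n\<in>F. A n) # t \<in> X}" if "F \<noteq> {}" "F \<subseteq> {..<m}" for F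
    unfolding X'_def using that by blast
  then have "product_blocks_in m (Suc k) (\<lambda>i. if i = 0 then A else B (i - 1)) X"
    by (rule product_blocks_in_Cons[OF A B])
  then show ?case by blast
qed

lemma finite_cover_product_blocks:
  assumes "finite J" "(\<Union>j\<in>J. C j) = UNIV"
  shows "\<exists>j\<in>J. \<exists>B. product_blocks_in m k B (C j)"
proof -
  obtain p where p: "block_ultrafilter p" "uf_sum p p = p"
    using idempotent_ultrafilter_exists by blast
  have T: "ultrafilter (tensor_power p k)"
    using ultrafilter_tensor_power p(1) block_ultrafilter_def by blast
  have "(\<Union>j\<in>J. C j) \<in> tensor_power p k"
    using assms(2) proper_filter_UNIV[OF ultrafilter_proper[OF T]] by simp
  then obtain j where j: "j \<in> J" "C j \<in> tensor_power p k"
    using ultrafilter_UN[OF T assms(1)] by blast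
  obtain B where "product_blocks_in m k B (C j)" using tensor_power_product_blocks[OF p j(2)] by blast
  then show ?thesis using j(1) by blast
qed

lemma osum_Cons: "ns \<noteq> [] \<Longrightarrow> osum f x (n # ns) = Option.bind (osum f x ns) (\<lambda>s. f (x n) s)"
  by (cases ns) auto

lemma osum_closed:
  assumes S: "partial_semigroup S f"
  shows "\<forall>n\<in>set ns. x n \<in> S \<Longrightarrow> osum f x ns = Some s \<Longrightarrow> s \<in> S"
proof (induction ns arbitrary: s)
  case (Cons n ns)
  show ?case
  proof (cases "ns = []")
    case False
    then obtain t where t: "osum f x ns = Some t" "f (x n) t = Some s"
      using Cons.prems osum_Cons[OF False, of f x n] by (cases "osum f x ns") auto
    moreover have "t \<in> S" "x n \<in> S" using Cons t by simp_all
    ultimately show ?thesis using S unfolding partial_semigroup_def by blast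
  qed (use Cons in simp)
qed simp

lemma osum_append:
  assumes S: "partial_semigroup S f"
  shows "ms \<noteq> [] \<Longrightarrow> ns \<noteq> [] \<Longrightarrow> \<forall>n\<in>set ms \<union> set ns. x n \<in> S \<Longrightarrow>
    osum f x (ms @ ns) = Option.bind (osum f x ms) (\<lambda>u. Option.bind (osum f x ns) (\<lambda>w. f u w))"
proof (induction ms)
  case (Cons n ms)
  show ?case
  proof (cases "ms = []")
    case True
    then show ?thesis using Cons osum_Cons by simp
  next
    case False
    have IH: "osum f x (ms @ ns) = Option.bind (osum f x ms) (\<lambda>u. Option.bind (osum f x ns) (\<lambda>w. f u w))"
      using Cons False by simp
    have e1: "osum f x (n # ms @ ns) = Option.bind (osum f x (ms @ ns)) (\<lambda>s. f (x n) s)"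
      using osum_Cons[of "ms @ ns" f x n] False by simp
    have e2: "osum f x (n # ms) = Option.bind (osum f x ms) (\<lambda>s. f (x n) s)"
      by (rule osum_Cons[OF False])
    show ?thesis
    proof (cases "osum f x ms")
      case (Some u)
      show ?thesis
      proof (cases "osum f x ns")
        case (Some w)
        have "u \<in> S" using osum_closed[OF S _ \<open>osum f x ms = Some u\<close>] Cons.prems(3) by simp
        moreover have "w \<in> S" using osum_closed[OF S _ Some] Cons.prems(3) by simp
        moreover have "x n \<in> S" using Cons.prems(3) by simp
        ultimately have "Option.bind (f (x n) u) (\<lambda>z. f z w) = Option.bind (f u w) (\<lambda>y. f (x n) y)"
          using S unfolding partial_semigroup_def by blast
        then show ?thesis using IH Some \<open>osum f x ms = Some u\<close> e1 e2 by simp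
      qed (use IH \<open>osum f x ms = Some u\<close> e1 e2 in simp)
    qed (use IH e1 e2 in simp)
  qed
qed simp

lemma sorted_list_of_set_Un:
  fixes A B :: "nat set"
  assumes "finite A" "finite B" "\<forall>u\<in>A. \<forall>v\<in>B. u < v"
  shows "sorted_list_of_set (A \<union> B) = sorted_list_of_set A @ sorted_list_of_set B"
proof (rule strict_sorted_equal)
  show "sorted_wrt (<) (sorted_list_of_set A @ sorted_list_of_set B)"
    using assms by (simp add: sorted_wrt_append)
qed (use assms in simp_all)

lemma fsum_closed:
  assumes "partial_semigroup S f" "finite F" "\<forall>n\<in>F. x n \<in> S" "fsum f x F = Some s"
  shows "s \<in> S"
  using osum_closed[OF assms(1), of "sorted_list_of_set F" x s] assms(2-) unfolding fsum_def by simp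

lemma fsum_Un:
  assumes S: "partial_semigroup S f" and "finite A" "finite B" "A \<noteq> {}" "B \<noteq> {}"
    and "\<forall>u\<in>A. \<forall>v\<in>B. u < v" "\<forall>n\<in>A \<union> B. x n \<in> S"
  shows "fsum f x (A \<union> B) = Option.bind (fsum f x A) (\<lambda>u. Option.bind (fsum f x B) (\<lambda>w. f u w))"
  unfolding fsum_def sorted_list_of_set_Un[OF assms(2,3,6)]
  by (rule osum_append[OF S]) (use assms in auto)

lemma fsum_insert_Min:
  assumes "finite F" "F \<noteq> {}" "\<forall>v\<in>F. a < v"
  shows "fsum f y (insert a F) = Option.bind (fsum f y F) (\<lambda>s. f (y a) s)"
proof -
  have "sorted_list_of_set (insert a F) = a # sorted_list_of_set F"
    using sorted_list_of_set_Un[of "{a}" F] assms by simp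
  then show ?thesis unfolding fsum_def using assms by (simp add: osum_Cons)
qed

lemma fsum_UN_blocks:
  assumes S: "partial_semigroup S f"
  shows "finite F \<Longrightarrow> F \<noteq> {} \<Longrightarrow>
    (\<forall>n\<in>F. finite (H n) \<and> H n \<noteq> {} \<and> (\<forall>u\<in>H n. x u \<in> S) \<and> fsum f x (H n) = Some (y n)) \<Longrightarrow>
    (\<forall>a\<in>F. \<forall>b\<in>F. a < b \<longrightarrow> (\<forall>u\<in>H a. \<forall>v\<in>H b. u < v)) \<Longrightarrow>
    fsum f y F = fsum f x (\<Union>n\<in>F. H n)"
proof (induction F rule: finite_linorder_min_induct)
  case (insert a F)
  show ?case
  proof (cases "F = {}")
    case True
    then show ?thesis using insert.prems(2) by (simp add: fsum_def)
  next
    case False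
    have H: "\<forall>n\<in>F. finite (H n) \<and> H n \<noteq> {} \<and> (\<forall>u\<in>H n. x u \<in> S) \<and> fsum f x (H n) = Some (y n)"
      using insert.prems(2) by simp
    have "fsum f y F = fsum f x (\<Union>n\<in>F. H n)"
      by (rule insert.IH[OF False H]) (use insert.prems(3) in blast)
    moreover have "fsum f y (insert a F) = Option.bind (fsum f y F) (\<lambda>s. f (y a) s)"
      using insert.hyps(1) False insert.hyps(2) by (rule fsum_insert_Min)
    moreover have "fsum f x (H a \<union> (\<Union>n\<in>F. H n)) =
        Option.bind (fsum f x (H a)) (\<lambda>u. Option.bind (fsum f x (\<Union>n\<in>F. H n)) (\<lambda>w. f u w))"
    proof (rule fsum_Un[OF S])
      have Ha: "finite (H a)" "H a \<noteq> {}" "\<forall>u\<in>H a. x u \<in> S" using insert.prems(2) by simp_all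
      then show "finite (H a)" "H a \<noteq> {}" by simp_all
      show "finite (\<Union>n\<in>F. H n)" using insert.hyps(1) H by simp
      show "(\<Union>n\<in>F. H n) \<noteq> {}" using H False by blast
      show "\<forall>u\<in>H a. \<forall>v\<in>\<Union>n\<in>F. H n. u < v" using insert.prems(3) insert.hyps(2) by blast
      show "\<forall>n\<in>H a \<union> (\<Union>n\<in>F. H n). x n \<in> S" using Ha(3) H by blast
    qed
    moreover have "fsum f x (H a) = Some (y a)" using insert.prems(2) by simp
    ultimately show ?thesis by simp
  qed
qed simp

text \<open>The sequence of sums of x over consecutive blocks, indexed from 1 like the sequences of
  the statement: its n-th term is the sum over B (n - 1).\<close>

definition block_sums :: "('a \<Rightarrow> 'a \<Rightarrow> 'a option) \<Rightarrow> (nat \<Rightarrow> 'a) \<Rightarrow> (nat \<Rightarrow> nat set) \<Rightarrow> nat \<Rightarrow> 'a" where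
  "block_sums f x B n = the (fsum f x (B (n - 1)))"

lemma increasing_blocks_block:
  assumes "increasing_blocks B"
  shows "finite (B n)" "B n \<noteq> {}" "B n \<subseteq> {1..}"
proof -
  have B: "finite (B n)" "B n \<noteq> {}" "0 < Min (B n)"
    using assms unfolding increasing_blocks_def blocks_above_def by blast+
  then show "finite (B n)" "B n \<noteq> {}" by simp_all
  show "B n \<subseteq> {1..}"
  proof
    fix u assume "u \<in> B n"
    then have "Min (B n) \<le> u" using B(1) by simp
    then show "u \<in> {1..}" using B(3) by simp
  qed
qed

lemma fsum_block_sums:
  assumes "adequate_seq S f x" "increasing_blocks B"
  shows "fsum f x (B n) = Some (block_sums f x B (Suc n))"
proof -
  have "fsum f x (B n) \<noteq> None"
    using assms(1) increasing_blocks_block[OF assms(2), of n] unfolding adequate_seq_def by simp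
  then show ?thesis unfolding block_sums_def by auto
qed

lemma product_subsystem_inf_block_sums:
  assumes x: "adequate_seq S f x" and B: "increasing_blocks B"
  shows "product_subsystem_inf f x 1 (block_sums f x B)"
proof -
  have blocks: "\<forall>n\<ge>1. finite (B (n - 1)) \<and> B (n - 1) \<noteq> {}"
    using increasing_blocks_block[OF B] by simp
  have start: "1 \<le> Min (B (1 - 1))"
    using B unfolding increasing_blocks_def blocks_above_def by (simp add: Suc_le_eq)
  have "Max (B (n - 1)) < Min (B (Suc n - 1))" if "1 \<le> n" for n
  proof -
    have "Max (B (n - 1)) < Min (B (Suc (n - 1)))" using B unfolding increasing_blocks_def by blast
    then show ?thesis using that by simp
  qed
  then have order: "\<forall>n\<ge>1. Max (B (n - 1)) < Min (B (Suc n - 1))" by blast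
  have "fsum f x (B (n - 1)) = Some (block_sums f x B n)" if "1 \<le> n" for n
    using fsum_block_sums[OF x B, of "n - 1"] that by simp
  then have sums: "\<forall>n\<ge>1. fsum f x (B (n - 1)) = Some (block_sums f x B n)" by blast
  show ?thesis
    unfolding product_subsystem_inf_def
    by (rule exI[of _ "\<lambda>n. B (n - 1)"]) (use blocks start order sums in simp)
qed

lemma product_subsystem_fin_block_sums:
  assumes "adequate_seq S f x" "increasing_blocks B"
  shows "product_subsystem_fin f x 1 m (block_sums f x B)"
proof -
  obtain H where H: "\<forall>n\<ge>1. finite (H n) \<and> H n \<noteq> {}" "Min (H 1) \<ge> 1"
    "\<forall>n\<ge>1. Max (H n) < Min (H (Suc n))" "\<forall>n\<ge>1. fsum f x (H n) = Some (block_sums f x B n)"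
    using product_subsystem_inf_block_sums[OF assms] unfolding product_subsystem_inf_def by blast
  show ?thesis unfolding product_subsystem_fin_def by (rule exI[of _ H]) (use H in auto)
qed

lemma block_sums_closed:
  assumes S: "partial_semigroup S f" and x: "adequate_seq S f x" and B: "increasing_blocks B"
  shows "block_sums f x B n \<in> S"
proof (rule fsum_closed[OF S increasing_blocks_block(1)[OF B]])
  have "x u \<in> S" if "1 \<le> u" for u using x that unfolding adequate_seq_def by blast
  then show "\<forall>u\<in>B (n - 1). x u \<in> S" using increasing_blocks_block(3)[OF B] by auto
  show "fsum f x (B (n - 1)) = Some (block_sums f x B n)"
    using fsum_block_sums[OF x B, of "n - 1"] by (cases n) (simp_all add: block_sums_def)
qed

lemma FS_subset:
  assumes "partial_semigroup S f" "\<And>n. y n \<in> S"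
  shows "FS f y A \<subseteq> S"
  using fsum_closed[OF assms(1)] assms(2) unfolding FS_def by blast

lemma fsum_block_sums_UN:
  assumes S: "partial_semigroup S f" and x: "adequate_seq S f x" and B: "increasing_blocks B"
    and F: "finite F" "F \<noteq> {}" "F \<subseteq> {1..}"
  shows "fsum f (block_sums f x B) F = fsum f x (\<Union>n\<in>F. B (n - 1))"
proof (rule fsum_UN_blocks[OF S F(1,2)])
  have F1: "1 \<le> n" if "n \<in> F" for n using that F(3) by auto
  have xS: "x u \<in> S" if "1 \<le> u" for u using x that unfolding adequate_seq_def by blast
  show "\<forall>n\<in>F. finite (B (n - 1)) \<and> B (n - 1) \<noteq> {} \<and> (\<forall>u\<in>B (n - 1). x u \<in> S) \<and>
      fsum f x (B (n - 1)) = Some (block_sums f x B n)"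
  proof
    fix n assume "n \<in> F"
    then have "fsum f x (B (n - 1)) = Some (block_sums f x B n)"
      using fsum_block_sums[OF x B, of "n - 1"] F1[OF \<open>n \<in> F\<close>] by simp
    moreover have "\<forall>u\<in>B (n - 1). x u \<in> S"
      using increasing_blocks_block(3)[OF B, of "n - 1"] xS by auto
    ultimately show "finite (B (n - 1)) \<and> B (n - 1) \<noteq> {} \<and> (\<forall>u\<in>B (n - 1). x u \<in> S) \<and>
      fsum f x (B (n - 1)) = Some (block_sums f x B n)"
      using increasing_blocks_block(1,2)[OF B] by blast
  qed
  show "\<forall>a\<in>F. \<forall>b\<in>F. a < b \<longrightarrow> (\<forall>u\<in>B (a - 1). \<forall>v\<in>B (b - 1). u < v)"
  proof (intro ballI impI)
    fix a b u v assume "a \<in> F" "b \<in> F" "a < b" "u \<in> B (a - 1)" "v \<in> B (b - 1)"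
    moreover have "a - 1 < b - 1" using F1[OF \<open>a \<in> F\<close>] \<open>a < b\<close> by simp
    ultimately show "u < v" using increasing_blocks_less[OF B] by blast
  qed
qed

lemma FS_block_sums:
  assumes S: "partial_semigroup S f" and x: "adequate_seq S f x" and B: "increasing_blocks B"
    and s: "s \<in> FS f (block_sums f x B) A" and A: "A \<subseteq> {1..}"
  shows "\<exists>G. finite G \<and> G \<noteq> {} \<and> Suc ` G \<subseteq> A \<and> fsum f x (\<Union>n\<in>G. B n) = Some s"
proof -
  obtain F where F: "finite F" "F \<noteq> {}" "F \<subseteq> A" "fsum f (block_sums f x B) F = Some s"
    using s unfolding FS_def by blast
  define G where "G = Suc -` F"
  have F_G: "F = Suc ` G"
  proof
    show "F \<subseteq> Suc ` G"
    proof
      fix n assume "n \<in> F"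
      then have "Suc (n - 1) = n" using F(3) A by auto
      then show "n \<in> Suc ` G" using \<open>n \<in> F\<close> unfolding G_def by (metis image_eqI vimageI)
    qed
  qed (auto simp: G_def)
  have "fsum f x (\<Union>n\<in>G. B n) = Some s"
    using fsum_block_sums_UN[OF S x B F(1,2)] F(3,4) A unfolding F_G by (simp add: image_image)
  moreover have "finite G" unfolding G_def using F(1) by (simp add: finite_vimageI)
  moreover have "G \<noteq> {}" "Suc ` G \<subseteq> A" using F(2,3) F_G by auto
  ultimately show ?thesis by blast
qed

text \<open>A list t of index sets, read as the point of S 1 \<times> ... \<times> S l whose i-th coordinate is the
  sum of x i over the (i - 1)-th entry of t.\<close>

lemma product_blocks_inD:
  assumes "product_blocks_in m k B X" "(\<forall>i<k. Fs i \<noteq> {} \<and> Fs i \<subseteq> {..<m}) \<and> Fs k \<noteq> {} \<and> finite (Fs k)"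
  shows "map (\<lambda>i. \<Union>n\<in>Fs i. B i n) [0..<Suc k] \<in> X"
  using assms unfolding product_blocks_in_def by blast

definition coordinate_sums ::
  "nat \<Rightarrow> (nat \<Rightarrow> 'a \<Rightarrow> 'a \<Rightarrow> 'a option) \<Rightarrow> (nat \<Rightarrow> nat \<Rightarrow> 'a) \<Rightarrow> nat set list \<Rightarrow> nat \<Rightarrow> 'a" where
  "coordinate_sums l op x t i = (if i \<in> {1..l} then the (fsum (op i) (x i) (t ! (i - 1))) else undefined)"

lemma PiE_FS_block_sums_coordinate_sums:
  fixes B :: "nat \<Rightarrow> nat \<Rightarrow> nat set"
  assumes S: "\<And>i. i \<in> {1..Suc k} \<Longrightarrow> partial_semigroup (S i) (op i)"
    and x: "\<And>i. i \<in> {1..Suc k} \<Longrightarrow> adequate_seq (S i) (op i) (x i)"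
    and B: "\<forall>i. increasing_blocks (B i)"
    and g: "g \<in> PiE {1..Suc k} (\<lambda>i. FS (op i) (block_sums (op i) (x i) (B (i - 1)))
                                       (if i < Suc k then {1..m} else {1..}))"
  shows "\<exists>Fs. ((\<forall>i<k. Fs i \<noteq> {} \<and> Fs i \<subseteq> {..<m}) \<and> Fs k \<noteq> {} \<and> finite (Fs k)) \<and>
    coordinate_sums (Suc k) op x (map (\<lambda>i. \<Union>n\<in>Fs i. B i n) [0..<Suc k]) = g"
proof -
  have "\<exists>G. finite G \<and> G \<noteq> {} \<and> (i < k \<longrightarrow> G \<subseteq> {..<m}) \<and>
      fsum (op (Suc i)) (x (Suc i)) (\<Union>n\<in>G. B i n) = Some (g (Suc i))" if i: "i < Suc k" for i
  proof -
    have i': "Suc i \<in> {1..Suc k}" using i by simp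
    then have gi: "g (Suc i) \<in> FS (op (Suc i)) (block_sums (op (Suc i)) (x (Suc i)) (B i))
        (if i < k then {1..m} else {1..})"
      using PiE_mem[OF g i'] by simp
    have "\<exists>G. finite G \<and> G \<noteq> {} \<and> Suc ` G \<subseteq> (if i < k then {1..m} else {1..}) \<and>
        fsum (op (Suc i)) (x (Suc i)) (\<Union>n\<in>G. B i n) = Some (g (Suc i))"
      by (rule FS_block_sums[OF S[OF i'] x[OF i'] B[rule_format] gi]) auto
    then obtain G where G: "finite G" "G \<noteq> {}" "Suc ` G \<subseteq> (if i < k then {1..m} else {1..})"
        "fsum (op (Suc i)) (x (Suc i)) (\<Union>n\<in>G. B i n) = Some (g (Suc i))"
      by blast
    moreover have "i < k \<longrightarrow> G \<subseteq> {..<m}" using G(3) by (auto simp: Suc_le_eq)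
    ultimately show ?thesis by blast
  qed
  then obtain Fs where Fs: "\<And>i. i < Suc k \<Longrightarrow> finite (Fs i) \<and> Fs i \<noteq> {} \<and> (i < k \<longrightarrow> Fs i \<subseteq> {..<m}) \<and>
      fsum (op (Suc i)) (x (Suc i)) (\<Union>n\<in>Fs i. B i n) = Some (g (Suc i))"
    by metis
  have "coordinate_sums (Suc k) op x (map (\<lambda>i. \<Union>n\<in>Fs i. B i n) [0..<Suc k]) = g"
  proof (rule ext)
    fix i
    show "coordinate_sums (Suc k) op x (map (\<lambda>i. \<Union>n\<in>Fs i. B i n) [0..<Suc k]) i = g i"
    proof (cases "i \<in> {1..Suc k}")
      case True
      then obtain j where j: "i = Suc j" "j < Suc k" by (cases i) auto
      then have "map (\<lambda>i. \<Union>n\<in>Fs i. B i n) [0..<Suc k] ! (i - 1) = (\<Union>n\<in>Fs j. B j n)"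
        by (simp del: upt_Suc)
      then show ?thesis using Fs[OF j(2)] True j(1) unfolding coordinate_sums_def by simp
    next
      case False
      then show ?thesis using PiE_arb[OF g False] unfolding coordinate_sums_def by auto
    qed
  qed
  moreover have "(\<forall>i<k. Fs i \<noteq> {} \<and> Fs i \<subseteq> {..<m}) \<and> Fs k \<noteq> {} \<and> finite (Fs k)"
    using Fs by simp
  ultimately show ?thesis by blast
qed

theorem theorem8:
  fixes l m r :: nat
    and S :: "nat \<Rightarrow> 'a set"
    and op :: "nat \<Rightarrow> 'a \<Rightarrow> 'a \<Rightarrow> 'a option"
    and x :: "nat \<Rightarrow> nat \<Rightarrow> 'a"
    and D :: "nat \<Rightarrow> (nat \<Rightarrow> 'a) set"
  assumes l: "l \<ge> 2" and m: "m \<ge> 1" and r: "r \<ge> 1"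
    and ps: "\<forall>i\<in>{1..l}. partial_semigroup (S i) (op i) \<and> commutative_ps (S i) (op i)
                 \<and> adequate (S i) (op i) \<and> countable (S i)"
    and xs: "\<forall>i\<in>{1..l}. adequate_seq (S i) (op i) (x i)"
    and cover: "(PiE {1..l} S) = (\<Union>j\<in>{1..r}. D j)"
  shows "\<exists>j\<in>{1..r}. \<exists>y :: nat \<Rightarrow> nat \<Rightarrow> 'a.
           (\<forall>i\<in>{1..l-1}. product_subsystem_fin (op i) (x i) 1 m (y i)) \<and>
           product_subsystem_inf (op l) (x l) 1 (y l) \<and>
           PiE {1..l} (\<lambda>i. if i < l then FS (op i) (y i) {1..m} else FS (op l) (y l) {1..})
             \<subseteq> D j"
proof -
  define k where "k = l - 1"
  have k: "l = Suc k" using l unfolding k_def by simp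
  have S: "partial_semigroup (S i) (op i)" and x: "adequate_seq (S i) (op i) (x i)"
    if "i \<in> {1..l}" for i using ps xs that by blast+
  define C where "C j = {t. coordinate_sums l op x t \<in> PiE {1..l} S \<longrightarrow> coordinate_sums l op x t \<in> D j}" for j
  have "(\<Union>j\<in>{1..r}. C j) = UNIV" using cover r unfolding C_def by auto
  then obtain j B where j: "j \<in> {1..r}" and B: "product_blocks_in m k B (C j)"
    using finite_cover_product_blocks[of "{1..r}" C m k] by blast
  have incr: "\<forall>i. increasing_blocks (B i)" using B unfolding product_blocks_in_def by blast
  define y where "y i = block_sums (op i) (x i) (B (i - 1))" for i
  have "\<forall>i\<in>{1..l-1}. product_subsystem_fin (op i) (x i) 1 m (y i)"
    unfolding y_def using product_subsystem_fin_block_sums[OF x incr[rule_format]] by auto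
  moreover have "product_subsystem_inf (op l) (x l) 1 (y l)"
    unfolding y_def using product_subsystem_inf_block_sums[OF x incr[rule_format]] k by simp
  moreover have "PiE {1..l} (\<lambda>i. if i < l then FS (op i) (y i) {1..m} else FS (op l) (y l) {1..}) \<subseteq> D j"
  proof
    fix g assume "g \<in> PiE {1..l} (\<lambda>i. if i < l then FS (op i) (y i) {1..m} else FS (op l) (y l) {1..})"
    also have "\<dots> = PiE {1..Suc k} (\<lambda>i. FS (op i) (y i) (if i < Suc k then {1..m} else {1..}))"
      unfolding k by (rule PiE_cong) auto
    finally have g: "g \<in> \<dots>" .
    obtain Fs where Fs_ok: "(\<forall>i<k. Fs i \<noteq> {} \<and> Fs i \<subseteq> {..<m}) \<and> Fs k \<noteq> {} \<and> finite (Fs k)"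
      and Fs: "coordinate_sums (Suc k) op x (map (\<lambda>i. \<Union>n\<in>Fs i. B i n) [0..<Suc k]) = g"
      using PiE_FS_block_sums_coordinate_sums[OF S x incr g[unfolded y_def]] k by blast
    have "map (\<lambda>i. \<Union>n\<in>Fs i. B i n) [0..<Suc k] \<in> C j"
      by (rule product_blocks_inD[OF B Fs_ok])
    moreover have "g \<in> PiE {1..l} S"
    proof -
      have "y i n \<in> S i" if "i \<in> {1..l}" for i n
        unfolding y_def using block_sums_closed[OF S[OF that] x[OF that]] incr by blast
      then have "FS (op i) (y i) A \<subseteq> S i" if "i \<in> {1..l}" for i A
        using FS_subset[OF S[OF that]] that by blast
      then have "PiE {1..l} (\<lambda>i. FS (op i) (y i) (if i < Suc k then {1..m} else {1..})) \<subseteq> PiE {1..l} S"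
        by (intro PiE_mono)
      then show ?thesis using g k by blast
    qed
    ultimately show "g \<in> D j" using Fs k unfolding C_def by simp
  qed
  ultimately show ?thesis by (intro bexI[OF _ j] exI[of _ y] conjI)
qed

end
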